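(* Suppose $u_1$ is strictly supermodular with respect to total orders $(\succsim_{Y_0},\succsim_{A_1})$. For any stage strategy $s_1^*$ of player 1, the following are equivalent: (1) $s_1^*$ is confound-defeating; (2) $s_1^*$ is monotone; (3) $s_1^*$ is $u_1$-cyclically monotone.
   Context: Three players $0,1,2$ have finite action sets $A_0,A_1,A_2$; $Y_0,Y_1$ are finite signal sets. Player 0 takes $a_0$, generating a signal $y_0\sim\rho_0(\cdot\mid a_0)$ observed only by player 1; players 1 and 2 then simultaneously take $a_1,a_2$, generating a public signal $y_1\sim\rho_1(\cdot\mid a_1,a_2)$. Assume: (i) $\rho_0(y_0\mid a_0)>0$ always; (ii) $\rho_1(y_1\mid a_1,a_2)>0$ implies $\rho_1(y_1\mid a_1,a_2')>0$; (iii) for every $a_2$ the vectors $(\rho_1(\cdot\mid a_1,a_2))_{a_1\in A_1}$ are linearly independent. Stage strategies: $\alpha_0\in\Delta(A_0)$, $\alpha_2\in\Delta(A_2)$, $s_1:Y_0\to\Delta(A_1)$; $\|\cdot\|$ is the sup norm. $\gamma(\alpha_0,s_1)[y_0,a_1]=\sum_{a_0}\alpha_0(a_0)\rho_0(y_0\mid a_0)s_1(y_0)[a_1]$ with marginals $\rho(\alpha_0)$ on $Y_0$ and $\phi(\alpha_0,s_1)$ on $A_1$; $p(\alpha_0,s_1,\alpha_2)[y_1]=\sum\alpha_0(a_0)\rho_0(y_0\mid a_0)s_1(y_0)[a_1]\alpha_2(a_2)\rho_1(y_1\mid a_1,a_2)$. Payoffs $u_0:A_0\times A_1\to\mathbb{R}$,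 $u_i:Y_0\times A_1\times A_2\to\mathbb{R}$ extended by expectation; $u_1(\cdot,\alpha_2)$ is $(y_0,a_1)\mapsto\sum_{a_2}\alpha_2(a_2)u_1(y_0,a_1,a_2)$. $B(s_1)$: set of $(\alpha_0,\alpha_2)$ with $\mathrm{supp}(\alpha_0)\subset\arg\max_{a_0}u_0(a_0,s_1)$, $\mathrm{supp}(\alpha_2)\subset\arg\max_{a_2}u_2(\alpha_0,s_1,a_2)$. $B_\eta(s_1)$ ($\eta\ge0$): set of $(\alpha_0,\alpha_2)$ with $(\alpha_0,\alpha_2)\in B(s_1')$ and $\|p(\alpha_0,s_1,\alpha_2)-p(\alpha_0,s_1',\alpha_2)\|\le\eta$ for some $s_1'$. Confound-defeating: $s_1^*$ satisfies at least one of (CD1) for every $\varepsilon>0$ there is $\eta>0$ such that for every $(\alpha_0,\alpha_2)\in B_\eta(s_1^* )$ and every $s_1'$ with $\|s_1'-s_1^*\|>\varepsilon$ and $\|p(\alpha_0,s_1',\alpha_2)-p(\alpha_0,s_1^*,\alpha_2)\|<\eta$ there is $\tilde s_1$ with $p(\alpha_0,\tilde s_1,\alpha_2)=p(\alpha_0,s_1',\alpha_2)$ and $u_1(\alpha_0,\tilde s_1,\alpha_2)>u_1(\alpha_0,s_1',\alpha_2)$; (CD2) for every $(\alpha_0,\alpha_2)\in B_0(s_1^* )$, $\gamma(\alpha_0,s_1^* )$ uniquely maximizes $\sum\gamma(y_0,a_1)u_1(y_0,a_1,\alpha_2)$ over $\gamma\in\Delta(Y_0\times A_1)$ with marginals $\rho(\alpha_0)$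 and $\phi(\alpha_0,s_1^* )$. $u_1$ is strictly supermodular with respect to $(\succsim_{Y_0},\succsim_{A_1})$ if $u_1(y_0,a_1,a_2)-u_1(y_0,a_1',a_2)>u_1(y_0',a_1,a_2)-u_1(y_0',a_1',a_2)$ for all $y_0\succ y_0'$, $a_1\succ a_1'$, $a_2$. $s_1$ is monotone if for any $y_0\succ y_0'$, $a_1\in\mathrm{supp}(s_1(y_0))$, $a_1'\in\mathrm{supp}(s_1(y_0'))$ we have $a_1\succsim a_1'$. For $u:Y_0\times A_1\to\mathbb{R}$, $S\subset Y_0\times A_1$ is $u$-cyclically monotone if for every finite $\{(x_i,y_i)\}_{i=1}^N\subset S$ ($y_{N+1}=y_1$), $\sum_iu(x_i,y_i)\ge\sum_iu(x_i,y_{i+1})$; $s_1$ is $u_1$-cyclically monotone if $\{(y_0,a_1):a_1\in\mathrm{supp}(s_1(y_0))\}$ is $u_1(\cdot,\alpha_2)$-cyclically monotone for all $\alpha_2\in\Delta(A_2)$. *)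

theory Defs
  imports Complex_Main
begin

(* Conventions:
   rho0 a0 y0      = rho_0(y0 | a0)
   rho1 a1 a2 y1   = rho_1(y1 | a1, a2)
   s1 y0 a1        = s_1(y0)[a1]
   all action/signal sets are finite types. *)

definition is_dist :: "('a::finite \<Rightarrow> real) \<Rightarrow> bool" where
  "is_dist \<alpha> \<longleftrightarrow> (\<forall>a. 0 \<le> \<alpha> a) \<and> (\<Sum>a\<in>UNIV. \<alpha> a) = 1"

definition is_strat :: "('y0::finite \<Rightarrow> 'a1::finite \<Rightarrow> real) \<Rightarrow> bool" where
  "is_strat s1 \<longleftrightarrow> (\<forall>y0. is_dist (s1 y0))"

definition supn :: "('x::finite \<Rightarrow> real) \<Rightarrow> real" where
  "supn f = Max (range (\<lambda>x. \<bar>f x\<bar>))"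

definition strat_dist :: "('y0::finite \<Rightarrow> 'a1::finite \<Rightarrow> real) \<Rightarrow> ('y0 \<Rightarrow> 'a1 \<Rightarrow> real) \<Rightarrow> real" where
  "strat_dist s s' = supn (\<lambda>(y0, a1). s y0 a1 - s' y0 a1)"

definition gam :: "('a0::finite \<Rightarrow> 'y0::finite \<Rightarrow> real) \<Rightarrow> ('a0 \<Rightarrow> real)
    \<Rightarrow> ('y0 \<Rightarrow> 'a1::finite \<Rightarrow> real) \<Rightarrow> 'y0 \<Rightarrow> 'a1 \<Rightarrow> real" where
  "gam rho0 \<alpha>0 s1 y0 a1 = (\<Sum>a0\<in>UNIV. \<alpha>0 a0 * rho0 a0 y0 * s1 y0 a1)"

definition rho_marg :: "('a0::finite \<Rightarrow> 'y0::finite \<Rightarrow> real) \<Rightarrow> ('a0 \<Rightarrow> real) \<Rightarrow> 'y0 \<Rightarrow> real" where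
  "rho_marg rho0 \<alpha>0 y0 = (\<Sum>a0\<in>UNIV. \<alpha>0 a0 * rho0 a0 y0)"

definition phi :: "('a0::finite \<Rightarrow> 'y0::finite \<Rightarrow> real) \<Rightarrow> ('a0 \<Rightarrow> real)
    \<Rightarrow> ('y0 \<Rightarrow> 'a1::finite \<Rightarrow> real) \<Rightarrow> 'a1 \<Rightarrow> real" where
  "phi rho0 \<alpha>0 s1 a1 = (\<Sum>y0\<in>UNIV. gam rho0 \<alpha>0 s1 y0 a1)"

definition pdist :: "('a0::finite \<Rightarrow> 'y0::finite \<Rightarrow> real) \<Rightarrow> ('a1::finite \<Rightarrow> 'a2::finite \<Rightarrow> 'y1 \<Rightarrow> real)
    \<Rightarrow> ('a0 \<Rightarrow> real) \<Rightarrow> ('y0 \<Rightarrow> 'a1 \<Rightarrow> real) \<Rightarrow> ('a2 \<Rightarrow> real) \<Rightarrow> 'y1 \<Rightarrow> real" where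
  "pdist rho0 rho1 \<alpha>0 s1 \<alpha>2 y1 =
     (\<Sum>a0\<in>UNIV. \<Sum>y0\<in>UNIV. \<Sum>a1\<in>UNIV. \<Sum>a2\<in>UNIV.
        \<alpha>0 a0 * rho0 a0 y0 * s1 y0 a1 * \<alpha>2 a2 * rho1 a1 a2 y1)"

definition u0_ext :: "('a0::finite \<Rightarrow> 'y0::finite \<Rightarrow> real) \<Rightarrow> ('a0 \<Rightarrow> 'a1::finite \<Rightarrow> real)
    \<Rightarrow> 'a0 \<Rightarrow> ('y0 \<Rightarrow> 'a1 \<Rightarrow> real) \<Rightarrow> real" where
  "u0_ext rho0 u0 a0 s1 = (\<Sum>y0\<in>UNIV. \<Sum>a1\<in>UNIV. rho0 a0 y0 * s1 y0 a1 * u0 a0 a1)"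

definition ui_ext :: "('a0::finite \<Rightarrow> 'y0::finite \<Rightarrow> real) \<Rightarrow> ('y0 \<Rightarrow> 'a1::finite \<Rightarrow> 'a2::finite \<Rightarrow> real)
    \<Rightarrow> ('a0 \<Rightarrow> real) \<Rightarrow> ('y0 \<Rightarrow> 'a1 \<Rightarrow> real) \<Rightarrow> ('a2 \<Rightarrow> real) \<Rightarrow> real" where
  "ui_ext rho0 u \<alpha>0 s1 \<alpha>2 =
     (\<Sum>a0\<in>UNIV. \<Sum>y0\<in>UNIV. \<Sum>a1\<in>UNIV. \<Sum>a2\<in>UNIV.
        \<alpha>0 a0 * rho0 a0 y0 * s1 y0 a1 * \<alpha>2 a2 * u y0 a1 a2)"

definition pt :: "'a \<Rightarrow> 'a \<Rightarrow> real" where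
  "pt a = (\<lambda>b. if b = a then 1 else 0)"

definition u_avg :: "('y0 \<Rightarrow> 'a1 \<Rightarrow> 'a2::finite \<Rightarrow> real) \<Rightarrow> ('a2 \<Rightarrow> real) \<Rightarrow> 'y0 \<Rightarrow> 'a1 \<Rightarrow> real" where
  "u_avg u \<alpha>2 y0 a1 = (\<Sum>a2\<in>UNIV. \<alpha>2 a2 * u y0 a1 a2)"

definition BR :: "('a0::finite \<Rightarrow> 'y0::finite \<Rightarrow> real) \<Rightarrow> ('a0 \<Rightarrow> 'a1::finite \<Rightarrow> real)
    \<Rightarrow> ('y0 \<Rightarrow> 'a1 \<Rightarrow> 'a2::finite \<Rightarrow> real) \<Rightarrow> ('y0 \<Rightarrow> 'a1 \<Rightarrow> real)
    \<Rightarrow> (('a0 \<Rightarrow> real) \<times> ('a2 \<Rightarrow> real)) set" where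
  "BR rho0 u0 u2 s1 = {(\<alpha>0, \<alpha>2). is_dist \<alpha>0 \<and> is_dist \<alpha>2 \<and>
      (\<forall>a0. 0 < \<alpha>0 a0 \<longrightarrow> (\<forall>b0. u0_ext rho0 u0 b0 s1 \<le> u0_ext rho0 u0 a0 s1)) \<and>
      (\<forall>a2. 0 < \<alpha>2 a2 \<longrightarrow>
         (\<forall>b2. ui_ext rho0 u2 \<alpha>0 s1 (pt b2) \<le> ui_ext rho0 u2 \<alpha>0 s1 (pt a2)))}"

definition B_eta :: "('a0::finite \<Rightarrow> 'y0::finite \<Rightarrow> real) \<Rightarrow> ('a1::finite \<Rightarrow> 'a2::finite \<Rightarrow> 'y1::finite \<Rightarrow> real)
    \<Rightarrow> ('a0 \<Rightarrow> 'a1 \<Rightarrow> real) \<Rightarrow> ('y0 \<Rightarrow> 'a1 \<Rightarrow> 'a2 \<Rightarrow> real) \<Rightarrow> real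
    \<Rightarrow> ('y0 \<Rightarrow> 'a1 \<Rightarrow> real) \<Rightarrow> (('a0 \<Rightarrow> real) \<times> ('a2 \<Rightarrow> real)) set" where
  "B_eta rho0 rho1 u0 u2 \<eta> s1 = {(\<alpha>0, \<alpha>2). \<exists>s1'. is_strat s1' \<and> (\<alpha>0, \<alpha>2) \<in> BR rho0 u0 u2 s1' \<and>
      supn (\<lambda>y1. pdist rho0 rho1 \<alpha>0 s1 \<alpha>2 y1 - pdist rho0 rho1 \<alpha>0 s1' \<alpha>2 y1) \<le> \<eta>}"

definition CD1 where
  "CD1 rho0 rho1 u0 u1 u2 s1 \<longleftrightarrow>
    (\<forall>\<epsilon>>0. \<exists>\<eta>>0. \<forall>\<alpha>0 \<alpha>2. (\<alpha>0, \<alpha>2) \<in> B_eta rho0 rho1 u0 u2 \<eta> s1 \<longrightarrow>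
       (\<forall>s1'. is_strat s1' \<and> strat_dist s1' s1 > \<epsilon> \<and>
          supn (\<lambda>y1. pdist rho0 rho1 \<alpha>0 s1' \<alpha>2 y1 - pdist rho0 rho1 \<alpha>0 s1 \<alpha>2 y1) < \<eta> \<longrightarrow>
          (\<exists>st. is_strat st \<and> pdist rho0 rho1 \<alpha>0 st \<alpha>2 = pdist rho0 rho1 \<alpha>0 s1' \<alpha>2 \<and>
                ui_ext rho0 u1 \<alpha>0 st \<alpha>2 > ui_ext rho0 u1 \<alpha>0 s1' \<alpha>2)))"

definition couplings :: "('y0::finite \<Rightarrow> real) \<Rightarrow> ('a1::finite \<Rightarrow> real) \<Rightarrow> ('y0 \<Rightarrow> 'a1 \<Rightarrow> real) set" where
  "couplings m1 m2 = {g. (\<forall>y a. 0 \<le> g y a) \<and> (\<Sum>y\<in>UNIV. \<Sum>a\<in>UNIV. g y a) = 1 \<and>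
      (\<forall>y. (\<Sum>a\<in>UNIV. g y a) = m1 y) \<and> (\<forall>a. (\<Sum>y\<in>UNIV. g y a) = m2 a)}"

definition CD2 where
  "CD2 rho0 rho1 u0 u1 u2 s1 \<longleftrightarrow>
    (\<forall>\<alpha>0 \<alpha>2. (\<alpha>0, \<alpha>2) \<in> B_eta rho0 rho1 u0 u2 0 s1 \<longrightarrow>
       (let gs = gam rho0 \<alpha>0 s1;
            C = couplings (rho_marg rho0 \<alpha>0) (phi rho0 \<alpha>0 s1);
            val = (\<lambda>g. \<Sum>y0\<in>UNIV. \<Sum>a1\<in>UNIV. g y0 a1 * u_avg u1 \<alpha>2 y0 a1)
        in gs \<in> C \<and> (\<forall>g\<in>C. g \<noteq> gs \<longrightarrow> val g < val gs)))"

definition confound_defeating where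
  "confound_defeating rho0 rho1 u0 u1 u2 s1 \<longleftrightarrow>
     CD1 rho0 rho1 u0 u1 u2 s1 \<or> CD2 rho0 rho1 u0 u1 u2 s1"

text \<open>strict part of a (total order) relation r, where (x, y) \<in> r means x \<succsim> y\<close>
definition strict :: "'a rel \<Rightarrow> 'a \<Rightarrow> 'a \<Rightarrow> bool" where
  "strict r x y \<longleftrightarrow> (x, y) \<in> r \<and> x \<noteq> y"

definition strictly_supermodular :: "'y0 rel \<Rightarrow> 'a1 rel \<Rightarrow> ('y0 \<Rightarrow> 'a1 \<Rightarrow> 'a2 \<Rightarrow> real) \<Rightarrow> bool" where
  "strictly_supermodular rY rA u \<longleftrightarrow>
     (\<forall>y0 y0' a1 a1' a2. strict rY y0 y0' \<and> strict rA a1 a1' \<longrightarrow>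
        u y0 a1 a2 - u y0 a1' a2 > u y0' a1 a2 - u y0' a1' a2)"

definition monotone_strat :: "'y0 rel \<Rightarrow> 'a1 rel \<Rightarrow> ('y0 \<Rightarrow> 'a1 \<Rightarrow> real) \<Rightarrow> bool" where
  "monotone_strat rY rA s1 \<longleftrightarrow>
     (\<forall>y0 y0' a1 a1'. strict rY y0 y0' \<and> 0 < s1 y0 a1 \<and> 0 < s1 y0' a1' \<longrightarrow> (a1, a1') \<in> rA)"

definition cyc_monotone :: "('x \<Rightarrow> 'y \<Rightarrow> real) \<Rightarrow> ('x \<times> 'y) set \<Rightarrow> bool" where
  "cyc_monotone u S \<longleftrightarrow>
     (\<forall>N::nat. \<forall>x y. N \<ge> 1 \<and> (\<forall>i<N. (x i, y i) \<in> S) \<longrightarrow>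
        (\<Sum>i<N. u (x i) (y i)) \<ge> (\<Sum>i<N. u (x i) (y (Suc i mod N))))"

definition supp_graph :: "('y0 \<Rightarrow> 'a1 \<Rightarrow> real) \<Rightarrow> ('y0 \<times> 'a1) set" where
  "supp_graph s1 = {(y0, a1). 0 < s1 y0 a1}"

definition u_cyc_monotone_strat :: "('y0 \<Rightarrow> 'a1 \<Rightarrow> 'a2::finite \<Rightarrow> real) \<Rightarrow> ('y0 \<Rightarrow> 'a1 \<Rightarrow> real) \<Rightarrow> bool" where
  "u_cyc_monotone_strat u1 s1 \<longleftrightarrow>
     (\<forall>\<alpha>2. is_dist \<alpha>2 \<longrightarrow> cyc_monotone (u_avg u1 \<alpha>2) (supp_graph s1))"

end

(*
  A coupling of two marginals on totally ordered finite sets whose support is a chain is, for a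
  strictly supermodular payoff, the unique optimal coupling: at the least corner of its support it
  carries as much mass as the marginals allow, any other coupling can be strictly improved by
  moving mass into that corner, and induction on the support finishes the argument.  For a
  monotone s1 the joint distribution of (y0, a1) has chain support, which gives (CD2); applied to
  the empirical coupling of a cycle it gives cyclical monotonicity, and two-cycles give the
  converse.  If s1 is not monotone, moving a little mass across a discordant pair of support
  points keeps both marginals, hence the distribution of the public signal, unchanged, and
  strictly raises the payoff of player 1 at pure best responses of players 0 and 2.  This
  violates (CD2) directly, and (CD1) at a payoff-maximising strategy among those with the same
  signal distribution.
*)
theory Submission
  imports Defs "HOL-Analysis.Analysis"
begin

lemma linear_order_total:
  assumes "linear_order r"
  shows "(x, y) \<in> r \<or> (y, x) \<in> r"
  using assms unfolding linear_order_on_def partial_order_on_def preorder_on_def refl_on_def total_on_def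
  by (cases "x = y") auto

lemma linear_order_strict_if_not:
  assumes "linear_order r" "(x, y) \<notin> r"
  shows "strict r y x"
  using assms linear_order_total[OF assms(1), of x y] by (auto simp: strict_def)

lemma linear_order_not_if_strict:
  assumes "linear_order r" "strict r x y"
  shows "(y, x) \<notin> r"
  using assms by (auto simp: strict_def linear_order_on_def partial_order_on_def antisym_def)

lemma linear_order_least:
  assumes r: "linear_order r" and "finite S" "S \<noteq> {}"
  obtains m where "m \<in> S" "\<And>x. x \<in> S \<Longrightarrow> (x, m) \<in> r"
  using assms(2,3)
proof (induction arbitrary: thesis rule: finite_ne_induct)
  case (singleton x)
  then show ?case using linear_order_total[OF r, of x x] by blast
next
  case (insert x F)
  then obtain m where m: "m \<in> F" "\<And>y. y \<in> F \<Longrightarrow> (y, m) \<in> r" by blast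
  have "trans r"
    using r by (simp add: linear_order_on_def partial_order_on_def preorder_on_def)
  then show ?case
    using insert.prems m linear_order_total[OF r, of x m] linear_order_total[OF r, of x x]
    by (metis insertE insertI1 insertI2 transD)
qed

lemma sum_split_at: "sum f (UNIV :: 'a::finite set) = f x + sum f (- {x})"
  by (simp add: Compl_eq_Diff_UNIV sum.remove)

lemma obtain_pos_summand:
  fixes f :: "'a \<Rightarrow> real"
  assumes "0 < sum f S"
  obtains x where "x \<in> S" "0 < f x"
  using assms sum_nonpos[of S f] by (meson not_le)

lemma sum_if_conj_eq:
  fixes c :: "'a::finite \<Rightarrow> 'b::comm_monoid_add"
  shows "(\<Sum>j\<in>UNIV. if P \<and> b = j then c j else 0) = (if P then c b else 0)"
    and "(\<Sum>j\<in>UNIV. if b = j \<and> P then c j else 0) = (if P then c b else 0)"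
  by (cases P; simp)+

lemma indicator_mult: "(if P then 1 else 0) * c = (if P then c else (0::real))"
  by simp

lemma finite_argmax:
  fixes f :: "'a::finite \<Rightarrow> 'b::linorder"
  obtains a where "\<And>b. f b \<le> f a"
proof -
  have "Max (range f) \<in> range f"
    by (rule Max_in) auto
  then obtain a where "Max (range f) = f a"
    by blast
  then show thesis
    using that[of a] Max_ge[of "range f"] by simp
qed

section \<open>Couplings with monotone support are uniquely optimal\<close>

definition total_value :: "('i::finite \<Rightarrow> 'j::finite \<Rightarrow> real) \<Rightarrow> ('i \<Rightarrow> 'j \<Rightarrow> real) \<Rightarrow> real" where
  "total_value u g = (\<Sum>i\<in>UNIV. \<Sum>j\<in>UNIV. g i j * u i j)"

definition same_marginals :: "('i::finite \<Rightarrow> 'j::finite \<Rightarrow> real) \<Rightarrow> ('i \<Rightarrow> 'j \<Rightarrow> real) \<Rightarrow> bool" where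
  "same_marginals g h \<longleftrightarrow>
     (\<forall>i. (\<Sum>j\<in>UNIV. g i j) = (\<Sum>j\<in>UNIV. h i j)) \<and> (\<forall>j. (\<Sum>i\<in>UNIV. g i j) = (\<Sum>i\<in>UNIV. h i j))"

definition strictly_supermodular2 :: "'i rel \<Rightarrow> 'j rel \<Rightarrow> ('i \<Rightarrow> 'j \<Rightarrow> real) \<Rightarrow> bool" where
  "strictly_supermodular2 rI rJ u \<longleftrightarrow>
     (\<forall>i i' j j'. strict rI i i' \<and> strict rJ j j' \<longrightarrow> u i' j + u i j' < u i j + u i' j')"

lemma strictly_supermodular2D:
  assumes "strictly_supermodular2 rI rJ u" "strict rI i i'" "strict rJ j j'"
  shows "u i' j + u i j' < u i j + u i' j'"
  using assms unfolding strictly_supermodular2_def by blast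

definition support_above :: "'i rel \<Rightarrow> 'j rel \<Rightarrow> ('i \<Rightarrow> 'j \<Rightarrow> real) \<Rightarrow> 'i \<Rightarrow> 'j \<Rightarrow> bool" where
  "support_above rI rJ h i0 j0 \<longleftrightarrow> (\<forall>i j. 0 < h i j \<longrightarrow> (i, i0) \<in> rI \<and> (j, j0) \<in> rJ)"

lemma total_value_diff:
  "total_value u (\<lambda>i j. f i j - e i j) = total_value u f - total_value u e"
  by (simp add: total_value_def left_diff_distrib sum_subtractf)

lemma total_value_add_scaled:
  "total_value u (\<lambda>i j. f i j + e * d i j) = total_value u f + e * total_value u d"
  by (simp add: total_value_def distrib_right sum.distrib sum_distrib_left mult.assoc)

lemma same_marginals_diff:
  assumes "same_marginals g h"
  shows "same_marginals (\<lambda>i j. g i j - e i j) (\<lambda>i j. h i j - e i j)"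
  using assms by (simp add: same_marginals_def sum_subtractf)

lemma same_marginals_pos_entry:
  fixes g h :: "'i::finite \<Rightarrow> 'j::finite \<Rightarrow> real"
  assumes marg: "same_marginals g h" and g_nonneg: "\<And>i j. 0 \<le> g i j" and "0 < g i j"
  shows "\<exists>j'. 0 < h i j'" "\<exists>i'. 0 < h i' j"
proof -
  have "0 < sum (g i) UNIV" "0 < (\<Sum>i'\<in>UNIV. g i' j)"
    using assms by (auto intro: sum_pos2)
  then have "0 < sum (h i) UNIV" "0 < (\<Sum>i'\<in>UNIV. h i' j)"
    using marg by (simp_all add: same_marginals_def)
  then show "\<exists>j'. 0 < h i j'" "\<exists>i'. 0 < h i' j"
    by (auto elim: obtain_pos_summand)
qed

lemma sum_outer_product_eq_mixed_differences:
  fixes a :: "'i::finite \<Rightarrow> real" and b :: "'j::finite \<Rightarrow> real"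
  assumes "sum a UNIV = 0" "sum b UNIV = 0"
  shows "(\<Sum>i\<in>UNIV. \<Sum>j\<in>UNIV. a i * b j * u i j)
    = (\<Sum>i\<in>UNIV. \<Sum>j\<in>UNIV. a i * b j * (u i j - u i j0 - u i0 j + u i0 j0))"
proof -
  have "(\<Sum>i\<in>UNIV. \<Sum>j\<in>UNIV. a i * b j * f i) = (\<Sum>i\<in>UNIV. a i * f i * sum b UNIV)" for f
    by (simp add: sum_distrib_left mult_ac)
  moreover have "(\<Sum>i\<in>UNIV. \<Sum>j\<in>UNIV. a i * b j * f j) = (\<Sum>j\<in>UNIV. b j * f j * sum a UNIV)" for f
    by (subst sum.swap) (simp add: sum_distrib_left mult_ac)
  ultimately have z: "(\<Sum>i\<in>UNIV. \<Sum>j\<in>UNIV. a i * b j * f i) = 0"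
    "(\<Sum>i\<in>UNIV. \<Sum>j\<in>UNIV. a i * b j * f' j) = 0" for f f'
    using assms by simp_all
  have "a i * b j * (u i j - u i j0 - u i0 j + u i0 j0)
      = a i * b j * u i j - a i * b j * u i j0 - a i * b j * u i0 j + a i * b j * u i0 j0" for i j
    by (simp add: algebra_simps)
  then show ?thesis
    by (simp only: sum_subtractf sum.distrib z(1)[of "\<lambda>i. u i j0"] z(2)[of "\<lambda>j. u i0 j"]
        z(1)[of "\<lambda>_. u i0 j0"])
qed

lemma sum_outer_product_pos:
  fixes a :: "'i::finite \<Rightarrow> real" and b :: "'j::finite \<Rightarrow> real"
  assumes sum_a: "sum a UNIV = 0" and sum_b: "sum b UNIV = 0"
    and nonneg: "\<And>i j. i \<noteq> i0 \<Longrightarrow> j \<noteq> j0 \<Longrightarrow> 0 \<le> a i * b j"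
    and sm: "\<And>i j. i \<noteq> i0 \<Longrightarrow> j \<noteq> j0 \<Longrightarrow> 0 < a i * b j \<Longrightarrow> u i j0 + u i0 j < u i0 j0 + u i j"
    and "i1 \<noteq> i0" "j1 \<noteq> j0" "0 < a i1 * b j1"
  shows "0 < (\<Sum>i\<in>UNIV. \<Sum>j\<in>UNIV. a i * b j * u i j)"
proof -
  define t where "t i j = a i * b j * (u i j - u i j0 - u i0 j + u i0 j0)" for i j
  have t_nonneg: "0 \<le> t i j" for i j
  proof (cases "i = i0 \<or> j = j0 \<or> a i * b j = 0")
    case True
    then show ?thesis by (auto simp: t_def)
  next
    case False
    then have "0 < a i * b j"
      using nonneg[of i j] by (auto simp: less_le)
    with False sm[of i j] show ?thesis
      by (simp add: t_def)
  qed
  have "0 < t i1 j1"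
    using assms(5-) sm[of i1 j1] by (simp add: t_def)
  then have "0 < (\<Sum>i\<in>UNIV. \<Sum>j\<in>UNIV. t i j)"
    using t_nonneg by (intro sum_pos2[of _ i1] sum_pos2[of _ j1] sum_nonneg) auto
  also have "(\<Sum>i\<in>UNIV. \<Sum>j\<in>UNIV. t i j) = (\<Sum>i\<in>UNIV. \<Sum>j\<in>UNIV. a i * b j * u i j)"
    unfolding t_def by (rule sum_outer_product_eq_mixed_differences[OF sum_a sum_b, symmetric])
  finally show ?thesis .
qed

lemma rank_one_update:
  fixes g u :: "'i::finite \<Rightarrow> 'j::finite \<Rightarrow> real"
  assumes "sum a UNIV = 0" "sum b UNIV = 0"
  shows "same_marginals (\<lambda>i j. g i j + a i * b j) g"
    and "total_value u (\<lambda>i j. g i j + a i * b j) = total_value u g + (\<Sum>i\<in>UNIV. \<Sum>j\<in>UNIV. a i * b j * u i j)"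
  using assms
  by (simp_all add: same_marginals_def total_value_def sum.distrib distrib_right
      sum_distrib_left[symmetric] sum_distrib_right[symmetric])

text \<open>The weights move \<open>\<delta>\<close> into the corner \<open>(i0, j0)\<close>, drawing it from the rest of row \<open>i0\<close> and
  of column \<open>j0\<close> in proportion to \<open>g\<close>; the compensating mass lands off the corner row and column.\<close>
lemma corner_transfer_weights:
  fixes g :: "'i::finite \<Rightarrow> 'j::finite \<Rightarrow> real"
  assumes g_nonneg: "\<And>i j. 0 \<le> g i j" and \<delta>_pos: "0 < \<delta>"
    and \<delta>_row: "\<delta> \<le> (\<Sum>j\<in>-{j0}. g i0 j)" and \<delta>_col: "\<delta> \<le> (\<Sum>i\<in>-{i0}. g i j0)"
  obtains a b where "sum a UNIV = 0" "sum b UNIV = 0" "a i0 * b j0 = \<delta>"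
    "\<And>i j. 0 \<le> g i j + a i * b j"
    "\<And>i j. i \<noteq> i0 \<Longrightarrow> j \<noteq> j0 \<Longrightarrow> 0 \<le> a i * b j"
    "\<And>i j. i \<noteq> i0 \<Longrightarrow> j \<noteq> j0 \<Longrightarrow> 0 < a i * b j \<Longrightarrow> 0 < g i j0 \<and> 0 < g i0 j"
    "\<exists>i1 j1. i1 \<noteq> i0 \<and> j1 \<noteq> j0 \<and> 0 < a i1 * b j1"
proof -
  define R where "R = (\<Sum>j\<in>-{j0}. g i0 j)"
  define C where "C = (\<Sum>i\<in>-{i0}. g i j0)"
  have R_pos: "0 < R" and C_pos: "0 < C"
    using \<delta>_pos \<delta>_row \<delta>_col by (simp_all add: R_def C_def)
  define a where "a i = (if i = i0 then \<delta> else - \<delta> * g i j0 / C)" for i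
  define b where "b j = (if j = j0 then 1 else - g i0 j / R)" for j
  have sum_a: "sum a UNIV = 0"
    using C_pos by (simp add: sum_split_at[of _ i0] a_def sum_negf sum_divide_distrib[symmetric]
        sum_distrib_left[symmetric] C_def[symmetric])
  have sum_b: "sum b UNIV = 0"
    using R_pos by (simp add: sum_split_at[of _ j0] b_def sum_negf sum_divide_distrib[symmetric]
        R_def[symmetric])
  have corner: "a i0 * b j0 = \<delta>"
    by (simp add: a_def b_def)
  have ab_off: "a i * b j = \<delta> * g i j0 / C * (g i0 j / R)" if "i \<noteq> i0" "j \<noteq> j0" for i j
    using that by (simp add: a_def b_def)
  have nonneg: "0 \<le> g i j + a i * b j" for i j
  proof -
    have "\<delta> * g i j0 \<le> C * g i j0" "\<delta> * g i0 j \<le> R * g i0 j"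
      using g_nonneg \<delta>_row \<delta>_col by (simp_all add: mult_right_mono R_def C_def)
    then have "\<delta> * g i j0 / C \<le> g i j0" "\<delta> * g i0 j / R \<le> g i0 j"
      using R_pos C_pos by (simp_all add: pos_divide_le_eq mult.commute)
    then show ?thesis
      using g_nonneg[of i j] g_nonneg[of i0 j0] \<delta>_pos ab_off[of i j] g_nonneg R_pos C_pos
      by (cases "i = i0"; cases "j = j0") (simp_all add: a_def b_def)
  qed
  have off_nonneg: "0 \<le> a i * b j" if "i \<noteq> i0" "j \<noteq> j0" for i j
    using that g_nonneg \<delta>_pos R_pos C_pos by (simp add: ab_off)
  have off_pos: "0 < g i j0 \<and> 0 < g i0 j" if "i \<noteq> i0" "j \<noteq> j0" "0 < a i * b j" for i j
    using that g_nonneg[of i j0] g_nonneg[of i0 j] \<delta>_pos R_pos C_pos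
    by (auto simp: ab_off zero_less_mult_iff order_le_less)
  obtain i1 j1 where i1: "i1 \<in> - {i0}" "0 < g i1 j0" and j1: "j1 \<in> - {j0}" "0 < g i0 j1"
    using C_pos R_pos obtain_pos_summand unfolding C_def R_def by metis
  then have "0 < a i1 * b j1"
    using \<delta>_pos R_pos C_pos by (simp add: ab_off)
  with i1 j1 have witness: "\<exists>i1 j1. i1 \<noteq> i0 \<and> j1 \<noteq> j0 \<and> 0 < a i1 * b j1"
    by auto
  show thesis
    by (rule that[OF sum_a sum_b corner nonneg off_nonneg off_pos witness])
qed

lemma corner_transfer:
  fixes g u :: "'i::finite \<Rightarrow> 'j::finite \<Rightarrow> real"
  assumes g_nonneg: "\<And>i j. 0 \<le> g i j" and \<delta>_pos: "0 < \<delta>"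
    and \<delta>_row: "\<delta> \<le> (\<Sum>j\<in>-{j0}. g i0 j)" and \<delta>_col: "\<delta> \<le> (\<Sum>i\<in>-{i0}. g i j0)"
    and sm: "\<And>i j. i \<noteq> i0 \<Longrightarrow> j \<noteq> j0 \<Longrightarrow> 0 < g i j0 \<Longrightarrow> 0 < g i0 j \<Longrightarrow>
      u i j0 + u i0 j < u i0 j0 + u i j"
  obtains g' where "\<And>i j. 0 \<le> g' i j" "same_marginals g' g" "g' i0 j0 = g i0 j0 + \<delta>"
    "total_value u g < total_value u g'"
proof -
  obtain a b where sum_a: "sum a UNIV = 0" and sum_b: "sum b UNIV = 0" and corner: "a i0 * b j0 = \<delta>"
    and nonneg: "\<And>i j. 0 \<le> g i j + a i * b j"
    and off_nonneg: "\<And>i j. i \<noteq> i0 \<Longrightarrow> j \<noteq> j0 \<Longrightarrow> 0 \<le> a i * b j"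
    and off_pos: "\<And>i j. i \<noteq> i0 \<Longrightarrow> j \<noteq> j0 \<Longrightarrow> 0 < a i * b j \<Longrightarrow> 0 < g i j0 \<and> 0 < g i0 j"
    and witness: "\<exists>i1 j1. i1 \<noteq> i0 \<and> j1 \<noteq> j0 \<and> 0 < a i1 * b j1"
    using corner_transfer_weights[OF g_nonneg \<delta>_pos \<delta>_row \<delta>_col] by blast
  have "0 < (\<Sum>i\<in>UNIV. \<Sum>j\<in>UNIV. a i * b j * u i j)"
    using witness sum_outer_product_pos[OF sum_a sum_b off_nonneg] sm off_pos by blast
  then show ?thesis
    using that[of "\<lambda>i j. g i j + a i * b j"] nonneg corner rank_one_update[OF sum_a sum_b] by simp
qed

lemma monotone_strat_corner:
  assumes rJ: "linear_order rJ" and mono: "monotone_strat rI rJ h"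
    and h_nonneg: "\<And>i j. 0 \<le> h i j" and above: "support_above rI rJ h i0 j0"
  shows "(\<forall>j. j \<noteq> j0 \<longrightarrow> h i0 j = 0) \<or> (\<forall>i. i \<noteq> i0 \<longrightarrow> h i j0 = 0)"
proof (rule ccontr)
  assume "\<not> ?thesis"
  then obtain i j where ne: "j \<noteq> j0" "h i0 j \<noteq> 0" "i \<noteq> i0" "h i j0 \<noteq> 0"
    by blast
  then have pos: "0 < h i0 j" "0 < h i j0"
    using h_nonneg by (auto simp: less_le)
  then have "strict rI i i0" "strict rJ j j0"
    using ne above by (auto simp: strict_def support_above_def)
  with pos show False
    using mono linear_order_not_if_strict[OF rJ] unfolding monotone_strat_def by blast
qed

lemma monotone_strat_least_corner:
  fixes h :: "'i::finite \<Rightarrow> 'j::finite \<Rightarrow> real"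
  assumes rI: "linear_order rI" and rJ: "linear_order rJ" and mono: "monotone_strat rI rJ h"
    and h_nonneg: "\<And>i j. 0 \<le> h i j" and pos: "\<exists>i j. 0 < h i j"
  obtains i0 j0 where "support_above rI rJ h i0 j0" "h i0 j0 \<noteq> 0"
    "(\<forall>j. j \<noteq> j0 \<longrightarrow> h i0 j = 0) \<or> (\<forall>i. i \<noteq> i0 \<longrightarrow> h i j0 = 0)"
proof -
  obtain i0 where i0: "\<exists>j. 0 < h i0 j" and row: "\<forall>i j. 0 < h i j \<longrightarrow> (i, i0) \<in> rI"
  proof (rule linear_order_least[OF rI, of "{i. \<exists>j. 0 < h i j}"])
  qed (use pos that in auto)
  obtain j0 where j0: "\<exists>i. 0 < h i j0" and col: "\<forall>i j. 0 < h i j \<longrightarrow> (j, j0) \<in> rJ"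
  proof (rule linear_order_least[OF rJ, of "{j. \<exists>i. 0 < h i j}"])
  qed (use pos that in auto)
  from row col have above: "support_above rI rJ h i0 j0"
    by (simp add: support_above_def)
  then have corner: "(\<forall>j. j \<noteq> j0 \<longrightarrow> h i0 j = 0) \<or> (\<forall>i. i \<noteq> i0 \<longrightarrow> h i j0 = 0)"
    by (rule monotone_strat_corner[OF rJ mono h_nonneg])
  obtain i j where "0 < h i0 j" "0 < h i j0"
    using i0 j0 by blast
  with corner have "h i0 j0 \<noteq> 0"
    by (cases "j = j0"; cases "i = i0") auto
  from above this corner show thesis
    by (rule that)
qed

lemma corner_improvement:
  fixes g h u :: "'i::finite \<Rightarrow> 'j::finite \<Rightarrow> real"
  assumes sm: "strictly_supermodular2 rI rJ u"
    and g_nonneg: "\<And>i j. 0 \<le> g i j" and h_nonneg: "\<And>i j. 0 \<le> h i j"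
    and marg: "same_marginals g h" and above: "support_above rI rJ h i0 j0"
    and corner: "(\<forall>j. j \<noteq> j0 \<longrightarrow> h i0 j = 0) \<or> (\<forall>i. i \<noteq> i0 \<longrightarrow> h i j0 = 0)"
  obtains g' where "\<And>i j. 0 \<le> g' i j" "same_marginals g' h" "g' i0 j0 = h i0 j0"
    "g' = g \<or> total_value u g < total_value u g'"
proof -
  define \<delta> where "\<delta> = h i0 j0 - g i0 j0"
  have row: "g i0 j0 + (\<Sum>j\<in>-{j0}. g i0 j) = h i0 j0 + (\<Sum>j\<in>-{j0}. h i0 j)"
    using marg sum_split_at[of "g i0" j0] sum_split_at[of "h i0" j0] by (simp add: same_marginals_def)
  have col: "g i0 j0 + (\<Sum>i\<in>-{i0}. g i j0) = h i0 j0 + (\<Sum>i\<in>-{i0}. h i j0)"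
    using marg sum_split_at[of "\<lambda>i. g i j0" i0] sum_split_at[of "\<lambda>i. h i j0" i0]
    by (simp add: same_marginals_def)
  have "0 \<le> (\<Sum>j\<in>-{j0}. g i0 j)" "0 \<le> (\<Sum>i\<in>-{i0}. g i j0)"
    "0 \<le> (\<Sum>j\<in>-{j0}. h i0 j)" "0 \<le> (\<Sum>i\<in>-{i0}. h i j0)"
    using g_nonneg h_nonneg by (simp_all add: sum_nonneg)
  moreover have "(\<Sum>j\<in>-{j0}. h i0 j) = 0 \<or> (\<Sum>i\<in>-{i0}. h i j0) = 0"
    using corner by auto
  ultimately have \<delta>_nonneg: "0 \<le> \<delta>" and \<delta>_row: "\<delta> \<le> (\<Sum>j\<in>-{j0}. g i0 j)"
    and \<delta>_col: "\<delta> \<le> (\<Sum>i\<in>-{i0}. g i j0)"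
    using row col by (auto simp: \<delta>_def)
  show ?thesis
  proof (cases "\<delta> = 0")
    case True
    then show ?thesis using that[of g] g_nonneg marg by (simp add: \<delta>_def)
  next
    case False
    have "u i j0 + u i0 j < u i0 j0 + u i j"
      if "i \<noteq> i0" "j \<noteq> j0" "0 < g i j0" "0 < g i0 j" for i j
    proof -
      have "(i, i0) \<in> rI" "(j, j0) \<in> rJ"
        using same_marginals_pos_entry[OF marg g_nonneg] that(3,4) above
        unfolding support_above_def by meson+
      then have "strict rI i i0" "strict rJ j j0"
        using that(1,2) by (auto simp: strict_def)
      then show ?thesis
        using strictly_supermodular2D[OF sm] by fastforce
    qed
    with corner_transfer[OF g_nonneg _ \<delta>_row \<delta>_col] False \<delta>_nonneg obtain g' where
      "\<And>i j. 0 \<le> g' i j" "same_marginals g' g" "g' i0 j0 = g i0 j0 + \<delta>"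
      "total_value u g < total_value u g'"
      by (metis order_le_less)
    with marg show ?thesis
      using that by (auto simp: \<delta>_def same_marginals_def)
  qed
qed

lemma monotone_coupling_optimal:
  fixes g h u :: "'i::finite \<Rightarrow> 'j::finite \<Rightarrow> real"
  assumes rI: "linear_order rI" and rJ: "linear_order rJ"
    and sm: "strictly_supermodular2 rI rJ u"
    and "monotone_strat rI rJ h"
    and "\<And>i j. 0 \<le> g i j" "\<And>i j. 0 \<le> h i j"
    and "same_marginals g h"
  shows "g = h \<or> total_value u g < total_value u h"
  using assms(4-)
  \<comment> \<open>At the least corner of the support of \<open>h\<close> the monotone \<open>h\<close> carries as much mass as the
    marginals allow; move \<open>g\<close> to agree there, then delete the corner mass from both.\<close>
proof (induction "card {(i, j). h i j \<noteq> 0}" arbitrary: g h rule: less_induct)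
  case less
  note mono = less.prems(1) and g_nonneg = less.prems(2) and h_nonneg = less.prems(3)
    and marg = less.prems(4)
  show ?case
  proof (cases "\<exists>i j. 0 < h i j")
    case False
    then have h0: "h i j = 0" for i j
      using h_nonneg[of i j] by (auto simp: order_le_less)
    have "g i j = 0" for i j
      using marg g_nonneg sum_nonneg_eq_0_iff[of UNIV "g i"] by (simp add: same_marginals_def h0)
    then show ?thesis by (simp add: h0 fun_eq_iff)
  next
    case True
    obtain i0 j0 where above: "support_above rI rJ h i0 j0" and h00: "h i0 j0 \<noteq> 0"
      and corner: "(\<forall>j. j \<noteq> j0 \<longrightarrow> h i0 j = 0) \<or> (\<forall>i. i \<noteq> i0 \<longrightarrow> h i j0 = 0)"
      using monotone_strat_least_corner[OF rI rJ mono h_nonneg True] by blast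
    obtain g' where g'_nonneg: "\<And>i j. 0 \<le> g' i j" and marg': "same_marginals g' h"
      and g'00: "g' i0 j0 = h i0 j0" and improve: "g' = g \<or> total_value u g < total_value u g'"
      using corner_improvement[OF sm g_nonneg h_nonneg marg above corner] by blast
    define e where "e i j = (if i = i0 \<and> j = j0 then h i0 j0 else 0)" for i j
    have "{(i, j). h i j - e i j \<noteq> 0} = {(i, j). h i j \<noteq> 0} - {(i0, j0)}"
      by (auto simp: e_def)
    moreover have "card ({(i, j). h i j \<noteq> 0} - {(i0, j0)}) < card {(i, j). h i j \<noteq> 0}"
      using h00 by (intro card_Diff1_less) auto
    ultimately have card_lt: "card {(i, j). h i j - e i j \<noteq> 0} < card {(i, j). h i j \<noteq> 0}"
      by simp
    have mono': "monotone_strat rI rJ (\<lambda>i j. h i j - e i j)"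
      using mono by (auto simp: monotone_strat_def e_def)
    have nonneg': "0 \<le> g' i j - e i j" "0 \<le> h i j - e i j" for i j
      using g'_nonneg h_nonneg g'00 by (simp_all add: e_def)
    have "(\<lambda>i j. g' i j - e i j) = (\<lambda>i j. h i j - e i j)
        \<or> total_value u (\<lambda>i j. g' i j - e i j) < total_value u (\<lambda>i j. h i j - e i j)"
      by (rule less.hyps[OF card_lt mono' nonneg' same_marginals_diff[OF marg']])
    then have "g' = h \<or> total_value u g' < total_value u h"
      by (auto simp: total_value_diff fun_eq_iff)
    with improve show ?thesis by auto
  qed
qed

section \<open>Monotone and cyclically monotone strategies\<close>

lemma is_dist_pos:
  assumes "is_dist \<alpha>"
  obtains a where "0 < \<alpha> a"
proof -
  have "0 < sum \<alpha> UNIV" using assms by (simp add: is_dist_def)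
  then show thesis
    using obtain_pos_summand that by blast
qed

lemma is_dist_pt: "is_dist (pt (a::'a::finite))"
  by (simp add: is_dist_def pt_def)

lemma pt_pos_iff: "0 < pt a b \<longleftrightarrow> b = a"
  by (simp add: pt_def)

lemma strictly_supermodular2_u_avg:
  assumes sm: "strictly_supermodular rY rA u" and \<alpha>: "is_dist \<alpha>"
  shows "strictly_supermodular2 rY rA (u_avg u \<alpha>)"
  unfolding strictly_supermodular2_def
proof (intro allI impI)
  fix y y' a a' assume "strict rY y y' \<and> strict rA a a'"
  then have "u y' a c - u y' a' c < u y a c - u y a' c" for c
    using sm unfolding strictly_supermodular_def by blast
  then have pos: "0 < u y a c - u y a' c - u y' a c + u y' a' c" for c
    by (simp add: algebra_simps)
  obtain b where "0 < \<alpha> b" using \<alpha> by (rule is_dist_pos)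
  then have "0 < \<alpha> b * (u y a b - u y a' b - u y' a b + u y' a' b)"
    using pos by simp
  moreover have "0 \<le> \<alpha> c * (u y a c - u y a' c - u y' a c + u y' a' c)" for c
    using \<alpha> pos[of c] by (simp add: is_dist_def less_imp_le)
  ultimately have "0 < (\<Sum>c\<in>UNIV. \<alpha> c * (u y a c - u y a' c - u y' a c + u y' a' c))"
    by (intro sum_pos2[of _ b]) auto
  then show "u_avg u \<alpha> y' a + u_avg u \<alpha> y a' < u_avg u \<alpha> y a + u_avg u \<alpha> y' a'"
    by (simp add: u_avg_def algebra_simps sum.distrib sum_subtractf)
qed

definition pair_count :: "nat \<Rightarrow> (nat \<Rightarrow> 'i) \<Rightarrow> (nat \<Rightarrow> 'j) \<Rightarrow> 'i \<Rightarrow> 'j \<Rightarrow> real" where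
  "pair_count N x y i j = (\<Sum>k<N. if x k = i \<and> y k = j then 1 else 0)"

lemma pair_count_row:
  fixes y :: "nat \<Rightarrow> 'j::finite"
  shows "(\<Sum>j\<in>UNIV. pair_count N x y i j) = (\<Sum>k<N. if x k = i then 1 else 0)"
  unfolding pair_count_def by (subst sum.swap) (simp add: sum_if_conj_eq)

lemma pair_count_col:
  fixes x :: "nat \<Rightarrow> 'i::finite"
  shows "(\<Sum>i\<in>UNIV. pair_count N x y i j) = (\<Sum>k<N. if y k = j then 1 else 0)"
  unfolding pair_count_def by (subst sum.swap) (simp add: sum_if_conj_eq)

lemma pair_count_pos:
  assumes "0 < pair_count N x y i j"
  obtains k where "k < N" "x k = i" "y k = j"
proof -
  obtain k where "k \<in> {..<N}" "0 < (if x k = i \<and> y k = j then 1 else 0 :: real)"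
    using assms unfolding pair_count_def by (rule obtain_pos_summand)
  then show thesis
    using that by (auto split: if_splits)
qed

lemma total_value_pair_count: "total_value u (pair_count N x y) = (\<Sum>k<N. u (x k) (y k))"
proof -
  have "total_value u (pair_count N x y)
      = (\<Sum>i\<in>UNIV. \<Sum>j\<in>UNIV. \<Sum>k<N. if x k = i \<and> y k = j then u i j else 0)"
    unfolding total_value_def pair_count_def sum_distrib_right by (intro sum.cong refl) simp
  also have "\<dots> = (\<Sum>k<N. \<Sum>i\<in>UNIV. \<Sum>j\<in>UNIV. if x k = i \<and> y k = j then u i j else 0)"
    by (simp add: sum.swap[of _ "{..<N}"])
  finally show ?thesis by (simp add: sum_if_conj_eq)
qed

lemma sum_lessThan_rotate:
  assumes "1 \<le> N"
  shows "(\<Sum>k<N. f (Suc k mod N)) = (\<Sum>k<N. f k :: 'a::comm_monoid_add)"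
proof -
  obtain M where N: "N = Suc M" using assms by (cases N) auto
  have "(\<Sum>k<Suc M. f (Suc k mod Suc M)) = (\<Sum>k<M. f (Suc k)) + f 0"
    by (simp add: sum.lessThan_Suc)
  also have "\<dots> = (\<Sum>k<Suc M. f k)"
    by (subst sum.lessThan_Suc_shift) (simp add: add.commute)
  finally show ?thesis using N by simp
qed

lemma monotone_strat_imp_u_cyc_monotone_strat:
  fixes u1 :: "'y0::finite \<Rightarrow> 'a1::finite \<Rightarrow> 'a2::finite \<Rightarrow> real"
  assumes rY: "linear_order rY" and rA: "linear_order rA" and sm: "strictly_supermodular rY rA u1"
    and mono: "monotone_strat rY rA s"
  shows "u_cyc_monotone_strat u1 s"
  unfolding u_cyc_monotone_strat_def cyc_monotone_def
proof (intro allI impI)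
  fix \<alpha>2 :: "'a2 \<Rightarrow> real" and N :: nat and x :: "nat \<Rightarrow> 'y0" and y :: "nat \<Rightarrow> 'a1"
  assume \<alpha>2: "is_dist \<alpha>2" and cycle: "1 \<le> N \<and> (\<forall>i<N. (x i, y i) \<in> supp_graph s)"
  define y' where "y' k = y (Suc k mod N)" for k
  have "monotone_strat rY rA (pair_count N x y)"
  proof -
    have "0 < s i j" if "0 < pair_count N x y i j" for i j
    proof -
      from that obtain k where "k < N" "x k = i" "y k = j"
        by (rule pair_count_pos)
      then show ?thesis using cycle by (auto simp: supp_graph_def)
    qed
    then show ?thesis using mono unfolding monotone_strat_def by blast
  qed
  moreover have "same_marginals (pair_count N x y') (pair_count N x y)"
    using sum_lessThan_rotate[of N "\<lambda>k. if y k = _ then 1 else 0 :: real"] cycle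
    by (simp add: same_marginals_def pair_count_row pair_count_col y'_def)
  moreover have "0 \<le> pair_count N x z i j" for z :: "nat \<Rightarrow> 'a1" and i j
    unfolding pair_count_def by (simp add: sum_nonneg)
  ultimately have "pair_count N x y' = pair_count N x y
      \<or> total_value (u_avg u1 \<alpha>2) (pair_count N x y') < total_value (u_avg u1 \<alpha>2) (pair_count N x y)"
    using monotone_coupling_optimal[OF rY rA strictly_supermodular2_u_avg[OF sm \<alpha>2]] by blast
  then have "total_value (u_avg u1 \<alpha>2) (pair_count N x y') \<le> total_value (u_avg u1 \<alpha>2) (pair_count N x y)"
    by auto
  then show "(\<Sum>i<N. u_avg u1 \<alpha>2 (x i) (y (Suc i mod N))) \<le> (\<Sum>i<N. u_avg u1 \<alpha>2 (x i) (y i))"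
    by (simp add: total_value_pair_count y'_def)
qed

lemma u_cyc_monotone_strat_imp_monotone_strat:
  fixes u1 :: "'y0 \<Rightarrow> 'a1 \<Rightarrow> 'a2::finite \<Rightarrow> real"
  assumes rA: "linear_order rA" and sm: "strictly_supermodular rY rA u1"
    and cyc: "u_cyc_monotone_strat u1 s"
  shows "monotone_strat rY rA s"
  unfolding monotone_strat_def
proof (intro allI impI)
  fix y0 y0' a1 a1' assume H: "strict rY y0 y0' \<and> 0 < s y0 a1 \<and> 0 < s y0' a1'"
  show "(a1, a1') \<in> rA"
  proof (rule ccontr)
    assume "(a1, a1') \<notin> rA"
    then have "strict rA a1' a1"
      by (rule linear_order_strict_if_not[OF rA])
    define \<alpha>2 where "\<alpha>2 = pt (undefined :: 'a2)"
    have \<alpha>2: "is_dist \<alpha>2"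
      by (simp add: \<alpha>2_def is_dist_pt)
    define x where "x i = (if i = 0 then y0 else y0')" for i :: nat
    define y where "y i = (if i = 0 then a1 else a1')" for i :: nat
    have "cyc_monotone (u_avg u1 \<alpha>2) (supp_graph s)"
      using cyc \<alpha>2 by (simp add: u_cyc_monotone_strat_def)
    moreover have "\<forall>i<2. (x i, y i) \<in> supp_graph s"
      using H by (auto simp: x_def y_def supp_graph_def less_2_cases_iff)
    ultimately have "(\<Sum>i<2. u_avg u1 \<alpha>2 (x i) (y (Suc i mod 2))) \<le> (\<Sum>i<2. u_avg u1 \<alpha>2 (x i) (y i))"
      unfolding cyc_monotone_def by simp
    then have "u_avg u1 \<alpha>2 y0 a1' + u_avg u1 \<alpha>2 y0' a1 \<le> u_avg u1 \<alpha>2 y0 a1 + u_avg u1 \<alpha>2 y0' a1'"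
      by (simp add: x_def y_def numeral_2_eq_2)
    moreover have "u_avg u1 \<alpha>2 y0' a1' + u_avg u1 \<alpha>2 y0 a1 < u_avg u1 \<alpha>2 y0 a1' + u_avg u1 \<alpha>2 y0' a1"
      using strictly_supermodular2D[OF strictly_supermodular2_u_avg[OF sm \<alpha>2]] H \<open>strict rA a1' a1\<close>
      by blast
    ultimately show False by linarith
  qed
qed

section \<open>Monotone strategies satisfy (CD2)\<close>

lemma gam_eq: "gam rho0 \<alpha>0 s y a = rho_marg rho0 \<alpha>0 y * s y a"
  unfolding gam_def rho_marg_def by (simp add: sum_distrib_right)

lemma total_value_gam:
  "total_value U (gam rho0 \<alpha>0 s) = total_value (\<lambda>y a. rho_marg rho0 \<alpha>0 y * U y a) s"
  unfolding total_value_def gam_eq by (simp add: mult_ac)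

lemma ui_ext_eq_total_value:
  fixes rho0 :: "'a0::finite \<Rightarrow> 'y0::finite \<Rightarrow> real" and s :: "'y0 \<Rightarrow> 'a1::finite \<Rightarrow> real"
    and u :: "'y0 \<Rightarrow> 'a1 \<Rightarrow> 'a2::finite \<Rightarrow> real"
  shows "ui_ext rho0 u \<alpha>0 s \<alpha>2 = total_value (u_avg u \<alpha>2) (gam rho0 \<alpha>0 s)"
proof -
  have "ui_ext rho0 u \<alpha>0 s \<alpha>2
      = (\<Sum>a0\<in>UNIV. \<Sum>y\<in>UNIV. \<Sum>a\<in>UNIV. \<alpha>0 a0 * rho0 a0 y * s y a * u_avg u \<alpha>2 y a)"
    unfolding ui_ext_def u_avg_def by (simp add: sum_distrib_left mult_ac)
  also have "\<dots> = (\<Sum>y\<in>UNIV. \<Sum>a\<in>UNIV. \<Sum>a0\<in>UNIV. \<alpha>0 a0 * rho0 a0 y * s y a * u_avg u \<alpha>2 y a)"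
    by (subst sum.swap) (rule sum.cong[OF refl], rule sum.swap)
  also have "\<dots> = total_value (u_avg u \<alpha>2) (gam rho0 \<alpha>0 s)"
    unfolding total_value_def gam_def by (simp add: sum_distrib_right)
  finally show ?thesis .
qed

lemma pdist_eq_ui_ext: "pdist rho0 rho1 \<alpha>0 s \<alpha>2 z = ui_ext rho0 (\<lambda>_ a1 a2. rho1 a1 a2 z) \<alpha>0 s \<alpha>2"
  unfolding pdist_def ui_ext_def ..

lemma rho_marg_nonneg:
  assumes "is_dist \<alpha>0" "\<And>a0. is_dist (rho0 a0)"
  shows "0 \<le> rho_marg rho0 \<alpha>0 y"
  using assms unfolding rho_marg_def is_dist_def by (simp add: sum_nonneg)

lemma gam_in_couplings:
  assumes \<alpha>0: "is_dist \<alpha>0" and rho0: "\<And>a0. is_dist (rho0 a0)" and s: "is_strat s"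
  shows "gam rho0 \<alpha>0 s \<in> couplings (rho_marg rho0 \<alpha>0) (phi rho0 \<alpha>0 s)"
proof -
  have rows: "(\<Sum>a\<in>UNIV. gam rho0 \<alpha>0 s y a) = rho_marg rho0 \<alpha>0 y" for y
    using s unfolding gam_eq is_strat_def is_dist_def by (simp add: sum_distrib_left[symmetric])
  have "(\<Sum>y\<in>UNIV. rho_marg rho0 \<alpha>0 y) = (\<Sum>a0\<in>UNIV. \<alpha>0 a0 * (\<Sum>y\<in>UNIV. rho0 a0 y))"
    unfolding rho_marg_def by (subst sum.swap) (simp add: sum_distrib_left)
  then have total: "(\<Sum>y\<in>UNIV. rho_marg rho0 \<alpha>0 y) = 1"
    using \<alpha>0 rho0 by (simp add: is_dist_def)
  show ?thesis
    unfolding couplings_def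
    using rows total rho_marg_nonneg[OF \<alpha>0 rho0] s
    by (auto simp: phi_def gam_eq is_strat_def is_dist_def)
qed

lemma couplings_same_marginals:
  assumes "g \<in> couplings m1 m2" "g' \<in> couplings m1 m2"
  shows "same_marginals g g'"
  using assms by (simp add: couplings_def same_marginals_def)

lemma B_eta_is_dist:
  assumes "(\<alpha>0, \<alpha>2) \<in> B_eta rho0 rho1 u0 u2 \<eta> s"
  shows "is_dist \<alpha>0" "is_dist \<alpha>2"
  using assms by (auto simp: B_eta_def BR_def)

lemma monotone_strat_gam:
  assumes "\<And>y. 0 \<le> rho_marg rho0 \<alpha>0 y" "monotone_strat rY rA s"
  shows "monotone_strat rY rA (gam rho0 \<alpha>0 s)"
proof -
  have "0 < s y a" if "0 < gam rho0 \<alpha>0 s y a" for y a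
    using that assms(1)[of y] by (simp add: gam_eq zero_less_mult_iff)
  then show ?thesis
    using assms(2) unfolding monotone_strat_def by blast
qed

theorem monotone_strat_imp_CD2:
  fixes rho0 :: "'a0::finite \<Rightarrow> 'y0::finite \<Rightarrow> real"
    and rho1 :: "'a1::finite \<Rightarrow> 'a2::finite \<Rightarrow> 'y1::finite \<Rightarrow> real"
  assumes rY: "linear_order rY" and rA: "linear_order rA" and sm: "strictly_supermodular rY rA u1"
    and rho0: "\<And>a0. is_dist (rho0 a0)" and s: "is_strat s" and mono: "monotone_strat rY rA s"
  shows "CD2 rho0 rho1 u0 u1 u2 s"
  unfolding CD2_def Let_def
proof (intro allI impI conjI ballI)
  fix \<alpha>0 \<alpha>2 assume B: "(\<alpha>0, \<alpha>2) \<in> B_eta rho0 rho1 u0 u2 0 s"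
  note \<alpha>0 = B_eta_is_dist(1)[OF B] and \<alpha>2 = B_eta_is_dist(2)[OF B]
  show gs: "gam rho0 \<alpha>0 s \<in> couplings (rho_marg rho0 \<alpha>0) (phi rho0 \<alpha>0 s)"
    using \<alpha>0 rho0 s by (rule gam_in_couplings)
  fix g assume g: "g \<in> couplings (rho_marg rho0 \<alpha>0) (phi rho0 \<alpha>0 s)" and ne: "g \<noteq> gam rho0 \<alpha>0 s"
  have "g = gam rho0 \<alpha>0 s
      \<or> total_value (u_avg u1 \<alpha>2) g < total_value (u_avg u1 \<alpha>2) (gam rho0 \<alpha>0 s)"
  proof (rule monotone_coupling_optimal[OF rY rA strictly_supermodular2_u_avg[OF sm \<alpha>2]])
    show "monotone_strat rY rA (gam rho0 \<alpha>0 s)"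
      using rho_marg_nonneg[OF \<alpha>0 rho0] mono by (rule monotone_strat_gam)
    show "same_marginals g (gam rho0 \<alpha>0 s)"
      using g gs by (rule couplings_same_marginals)
  qed (use g gs in \<open>auto simp: couplings_def\<close>)
  with ne show "(\<Sum>y0\<in>UNIV. \<Sum>a1\<in>UNIV. g y0 a1 * u_avg u1 \<alpha>2 y0 a1)
      < (\<Sum>y0\<in>UNIV. \<Sum>a1\<in>UNIV. gam rho0 \<alpha>0 s y0 a1 * u_avg u1 \<alpha>2 y0 a1)"
    by (simp add: total_value_def)
qed

section \<open>Non-monotone strategies are not confound-defeating\<close>

definition swap_matrix :: "'y \<Rightarrow> 'y \<Rightarrow> 'a \<Rightarrow> 'a \<Rightarrow> 'y \<Rightarrow> 'a \<Rightarrow> real" where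
  "swap_matrix y0 y0' a1 a1' y a =
     (if y0 = y \<and> a1' = a then 1 else 0) + (if y0' = y \<and> a1 = a then 1 else 0)
   - (if y0 = y \<and> a1 = a then 1 else 0) - (if y0' = y \<and> a1' = a then 1 else 0)"

lemma swap_matrix_row:
  fixes a1 :: "'a::finite"
  shows "(\<Sum>a\<in>UNIV. swap_matrix y0 y0' a1 a1' y a) = 0"
  by (simp add: swap_matrix_def sum.distrib sum_subtractf sum_if_conj_eq)

lemma swap_matrix_col:
  fixes y0 :: "'y::finite"
  shows "(\<Sum>y\<in>UNIV. swap_matrix y0 y0' a1 a1' y a) = 0"
  by (simp add: swap_matrix_def sum.distrib sum_subtractf sum_if_conj_eq)

lemma total_value_swap_matrix:
  "total_value U (swap_matrix y0 y0' a1 a1') = U y0 a1' + U y0' a1 - U y0 a1 - U y0' a1'"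
  unfolding total_value_def swap_matrix_def
  by (simp add: distrib_right left_diff_distrib indicator_mult sum.distrib sum_subtractf
      sum_if_conj_eq)

lemma swap_matrix_nonneg:
  assumes "y0 \<noteq> y0'" "a1 \<noteq> a1'" "(y, a) \<noteq> (y0, a1)" "(y, a) \<noteq> (y0', a1')"
  shows "0 \<le> swap_matrix y0 y0' a1 a1' y a"
  using assms by (auto simp: swap_matrix_def)

lemma swap_matrix_source:
  assumes "y0 \<noteq> y0'" "a1 \<noteq> a1'"
  shows "swap_matrix y0 y0' a1 a1' y0 a1 = -1" "swap_matrix y0 y0' a1 a1' y0' a1' = -1"
  using assms by (auto simp: swap_matrix_def)

lemma swap_perturbation:
  fixes rho0 :: "'a0::finite \<Rightarrow> 'y::finite \<Rightarrow> real" and s :: "'y \<Rightarrow> 'a::finite \<Rightarrow> real"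
  assumes s: "is_strat s" and rho_marg_pos: "\<And>y. 0 < rho_marg rho0 \<alpha>0 y"
    and ne: "y0 \<noteq> y0'" "a1 \<noteq> a1'" and pos: "0 < s y0 a1" "0 < s y0' a1'"
  obtains e st where "0 < e" "is_strat st"
    "gam rho0 \<alpha>0 st = (\<lambda>y a. gam rho0 \<alpha>0 s y a + e * swap_matrix y0 y0' a1 a1' y a)"
proof -
  define m where "m = rho_marg rho0 \<alpha>0"
  have m: "0 < m y" for y
    using rho_marg_pos by (simp add: m_def)
  define e where "e = min (m y0 * s y0 a1) (m y0' * s y0' a1')"
  define st where "st y a = s y a + e / m y * swap_matrix y0 y0' a1 a1' y a" for y a
  have e_pos: "0 < e"
    using m pos by (simp add: e_def)
  have st_nonneg: "0 \<le> st y a" for y a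
  proof (cases "(y, a) = (y0, a1) \<or> (y, a) = (y0', a1')")
    case True
    have "e / m y0 \<le> s y0 a1" "e / m y0' \<le> s y0' a1'"
      using m[of y0] m[of y0'] by (simp_all add: e_def pos_divide_le_eq mult.commute)
    with True show ?thesis
      by (auto simp: st_def swap_matrix_source[OF ne])
  next
    case False
    then show ?thesis
      using s swap_matrix_nonneg[OF ne] e_pos m[of y]
      by (simp add: st_def is_strat_def is_dist_def)
  qed
  have st_sum: "(\<Sum>a\<in>UNIV. st y a) = 1" for y
  proof -
    have "(\<Sum>a\<in>UNIV. st y a) = (\<Sum>a\<in>UNIV. s y a) + e / m y * (\<Sum>a\<in>UNIV. swap_matrix y0 y0' a1 a1' y a)"
      unfolding st_def by (simp only: sum.distrib sum_distrib_left)
    then show ?thesis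
      using s by (simp add: swap_matrix_row is_strat_def is_dist_def)
  qed
  have "is_strat st"
    using st_nonneg st_sum by (simp add: is_strat_def is_dist_def)
  moreover have "m y * st y a = m y * s y a + e * swap_matrix y0 y0' a1 a1' y a" for y a
    using m[of y] by (simp add: st_def field_simps)
  then have "gam rho0 \<alpha>0 st = (\<lambda>y a. gam rho0 \<alpha>0 s y a + e * swap_matrix y0 y0' a1 a1' y a)"
    by (simp add: fun_eq_iff gam_eq flip: m_def)
  ultimately show ?thesis
    by (rule that[OF e_pos])
qed

lemma exists_max_strategy:
  fixes V :: "'z \<Rightarrow> 'y::finite \<Rightarrow> 'a::finite \<Rightarrow> real" and W :: "'y \<Rightarrow> 'a \<Rightarrow> real"
  assumes s0: "is_strat s0"
  obtains s where "is_strat s" "\<forall>z. total_value (V z) s = total_value (V z) s0"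
    "\<forall>t. is_strat t \<and> (\<forall>z. total_value (V z) t = total_value (V z) s0)
       \<longrightarrow> total_value W t \<le> total_value W s"
proof -
  define vec where "vec t = (\<chi> p. t (fst p) (snd p))" for t :: "'y \<Rightarrow> 'a \<Rightarrow> real"
  define S where "S = {v :: real^('y \<times> 'a). (\<forall>y a. 0 \<le> v $ (y, a)) \<and> (\<forall>y. (\<Sum>a\<in>UNIV. v $ (y, a)) = 1)
      \<and> (\<forall>z. (\<Sum>y\<in>UNIV. \<Sum>a\<in>UNIV. v $ (y, a) * V z y a) = total_value (V z) s0)}"
  define f where "f v = (\<Sum>y\<in>UNIV. \<Sum>a\<in>UNIV. v $ (y, a) * W y a)" for v :: "real^('y \<times> 'a)"
  have vec_in_S: "vec t \<in> S" if "is_strat t" "\<forall>z. total_value (V z) t = total_value (V z) s0" for t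
    using that by (simp add: S_def vec_def is_strat_def is_dist_def total_value_def)
  have "closed S"
    unfolding S_def
    by (intro closed_Collect_conj closed_Collect_all closed_Collect_le closed_Collect_eq continuous_intros)
  moreover have "S \<subseteq> cbox 0 1"
  proof
    fix v assume "v \<in> S"
    then have "0 \<le> v $ (y, a)" "v $ (y, a) \<le> 1" for y a
      using member_le_sum[of a UNIV "\<lambda>a. v $ (y, a)"] by (auto simp: S_def)
    then show "v \<in> cbox 0 1"
      by (auto simp: mem_box_cart)
  qed
  ultimately have "compact S"
    by (metis compact_cbox compact_Int_closed inf.absorb_iff2)
  moreover have "S \<noteq> {}"
    using vec_in_S s0 by blast
  moreover have "continuous_on S f"
    unfolding f_def by (intro continuous_intros)
  ultimately obtain x where x: "x \<in> S" "\<And>v. v \<in> S \<Longrightarrow> f v \<le> f x"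
    using continuous_attains_sup by metis
  show ?thesis
  proof (rule that[of "\<lambda>y a. x $ (y, a)"])
    show "is_strat (\<lambda>y a. x $ (y, a))" "\<forall>z. total_value (V z) (\<lambda>y a. x $ (y, a)) = total_value (V z) s0"
      using x(1) by (simp_all add: S_def is_strat_def is_dist_def total_value_def)
    show "\<forall>t. is_strat t \<and> (\<forall>z. total_value (V z) t = total_value (V z) s0)
       \<longrightarrow> total_value W t \<le> total_value W (\<lambda>y a. x $ (y, a))"
      using vec_in_S x(2) by (fastforce simp: f_def vec_def total_value_def)
  qed
qed

lemma exists_best_strategy_same_signals:
  fixes rho0 :: "'a0::finite \<Rightarrow> 'y0::finite \<Rightarrow> real"
    and rho1 :: "'a1::finite \<Rightarrow> 'a2::finite \<Rightarrow> 'y1::finite \<Rightarrow> real"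
  assumes "is_strat s"
  obtains sx where "is_strat sx" "pdist rho0 rho1 \<alpha>0 sx \<alpha>2 = pdist rho0 rho1 \<alpha>0 s \<alpha>2"
    "\<And>t. is_strat t \<Longrightarrow> pdist rho0 rho1 \<alpha>0 t \<alpha>2 = pdist rho0 rho1 \<alpha>0 s \<alpha>2 \<Longrightarrow>
      ui_ext rho0 u1 \<alpha>0 t \<alpha>2 \<le> ui_ext rho0 u1 \<alpha>0 sx \<alpha>2"
proof -
  define V where "V z = (\<lambda>y a. rho_marg rho0 \<alpha>0 y * u_avg (\<lambda>_ a1 a2. rho1 a1 a2 z) \<alpha>2 y a)" for z
  define W where "W = (\<lambda>y a. rho_marg rho0 \<alpha>0 y * u_avg u1 \<alpha>2 y a)"
  have pdist: "pdist rho0 rho1 \<alpha>0 t \<alpha>2 = (\<lambda>z. total_value (V z) t)" for t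
    by (simp add: fun_eq_iff pdist_eq_ui_ext ui_ext_eq_total_value total_value_gam V_def)
  have ui: "ui_ext rho0 u1 \<alpha>0 t \<alpha>2 = total_value W t" for t
    by (simp add: ui_ext_eq_total_value total_value_gam W_def)
  obtain sx where "is_strat sx" "\<forall>z. total_value (V z) sx = total_value (V z) s"
    "\<forall>t. is_strat t \<and> (\<forall>z. total_value (V z) t = total_value (V z) s)
       \<longrightarrow> total_value W t \<le> total_value W sx"
    using exists_max_strategy[OF assms, of V W] by blast
  then show ?thesis
    using that[of sx] by (simp add: pdist ui fun_eq_iff)
qed

lemma supn_ge: "\<bar>f x\<bar> \<le> supn f"
  unfolding supn_def by (rule Max_ge) auto

lemma supn_zero: "supn (\<lambda>_. 0) = 0"
  by (simp add: supn_def)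

lemma best_responses_exist:
  fixes rho0 :: "'a0::finite \<Rightarrow> 'y0::finite \<Rightarrow> real"
    and u2 :: "'y0 \<Rightarrow> 'a1::finite \<Rightarrow> 'a2::finite \<Rightarrow> real"
  obtains \<alpha>0 \<alpha>2 where "(\<alpha>0, \<alpha>2) \<in> BR rho0 u0 u2 s"
proof -
  obtain a0 where a0: "\<And>b. u0_ext rho0 u0 b s \<le> u0_ext rho0 u0 a0 s"
    using finite_argmax[of "\<lambda>b. u0_ext rho0 u0 b s"] by blast
  obtain a2 where a2: "\<And>b. ui_ext rho0 u2 (pt a0) s (pt b) \<le> ui_ext rho0 u2 (pt a0) s (pt a2)"
    using finite_argmax[of "\<lambda>b. ui_ext rho0 u2 (pt a0) s (pt b)"] by blast
  have "(pt a0, pt a2) \<in> BR rho0 u0 u2 s"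
    unfolding BR_def using a0 a2 by (auto simp: is_dist_pt pt_pos_iff)
  then show thesis
    by (rule that)
qed

lemma BR_imp_B_eta:
  assumes "(\<alpha>0, \<alpha>2) \<in> BR rho0 u0 u2 s" "is_strat s" "0 \<le> \<eta>"
  shows "(\<alpha>0, \<alpha>2) \<in> B_eta rho0 rho1 u0 u2 \<eta> s"
  using assms unfolding B_eta_def by (auto intro!: exI[of _ s] simp: supn_zero)

text \<open>A payoff-maximising strategy among those with the signal distribution of \<open>s\<close> exists by
  compactness; if it is strictly better than \<open>s\<close>, it lies at positive distance from \<open>s\<close>, and (CD1)
  would have to improve on it.\<close>
lemma not_CD1_if_better_same_signals:
  fixes rho0 :: "'a0::finite \<Rightarrow> 'y0::finite \<Rightarrow> real"
    and rho1 :: "'a1::finite \<Rightarrow> 'a2::finite \<Rightarrow> 'y1::finite \<Rightarrow> real"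
  assumes s: "is_strat s" and BR: "(\<alpha>0, \<alpha>2) \<in> BR rho0 u0 u2 s"
    and t: "is_strat t" "pdist rho0 rho1 \<alpha>0 t \<alpha>2 = pdist rho0 rho1 \<alpha>0 s \<alpha>2"
    and better: "ui_ext rho0 u1 \<alpha>0 s \<alpha>2 < ui_ext rho0 u1 \<alpha>0 t \<alpha>2"
  shows "\<not> CD1 rho0 rho1 u0 u1 u2 s"
proof
  assume cd1: "CD1 rho0 rho1 u0 u1 u2 s"
  obtain sx where sx: "is_strat sx" "pdist rho0 rho1 \<alpha>0 sx \<alpha>2 = pdist rho0 rho1 \<alpha>0 s \<alpha>2"
    and best: "\<And>t. is_strat t \<Longrightarrow> pdist rho0 rho1 \<alpha>0 t \<alpha>2 = pdist rho0 rho1 \<alpha>0 s \<alpha>2 \<Longrightarrow>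
      ui_ext rho0 u1 \<alpha>0 t \<alpha>2 \<le> ui_ext rho0 u1 \<alpha>0 sx \<alpha>2"
    using exists_best_strategy_same_signals[OF s] by blast
  have "sx \<noteq> s"
    using better best[OF t] by auto
  then obtain y a where "sx y a \<noteq> s y a"
    by (auto simp: fun_eq_iff)
  moreover have "\<bar>sx y a - s y a\<bar> \<le> strat_dist sx s"
    unfolding strat_dist_def using supn_ge[of "\<lambda>(y, a). sx y a - s y a" "(y, a)"] by simp
  ultimately have dist_pos: "0 < strat_dist sx s / 2"
    by linarith
  obtain \<eta> where "0 < \<eta>" and H: "\<forall>s1'. is_strat s1' \<and> strat_dist s1' s > strat_dist sx s / 2 \<and>
      supn (\<lambda>y1. pdist rho0 rho1 \<alpha>0 s1' \<alpha>2 y1 - pdist rho0 rho1 \<alpha>0 s \<alpha>2 y1) < \<eta> \<longrightarrow>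
      (\<exists>st. is_strat st \<and> pdist rho0 rho1 \<alpha>0 st \<alpha>2 = pdist rho0 rho1 \<alpha>0 s1' \<alpha>2 \<and>
        ui_ext rho0 u1 \<alpha>0 st \<alpha>2 > ui_ext rho0 u1 \<alpha>0 s1' \<alpha>2)"
    using cd1 dist_pos BR_imp_B_eta[OF BR s] unfolding CD1_def by (meson less_imp_le)
  then obtain st where "is_strat st" "pdist rho0 rho1 \<alpha>0 st \<alpha>2 = pdist rho0 rho1 \<alpha>0 sx \<alpha>2"
    "ui_ext rho0 u1 \<alpha>0 sx \<alpha>2 < ui_ext rho0 u1 \<alpha>0 st \<alpha>2"
    using sx dist_pos by (auto simp: supn_zero)
  with sx(2) best show False
    by fastforce
qed

lemma rho_marg_pos:
  assumes "is_dist \<alpha>0" "\<And>a0 y0. 0 < rho0 a0 y0" "\<And>a0. is_dist (rho0 a0)"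
  shows "0 < rho_marg rho0 \<alpha>0 y"
proof -
  obtain a0 where "0 < \<alpha>0 a0"
    using assms(1) by (rule is_dist_pos)
  then show ?thesis
    using assms unfolding rho_marg_def is_dist_def
    by (intro sum_pos2[of _ a0]) (auto intro: mult_nonneg_nonneg less_imp_le)
qed

lemma not_CD2_if_better_same_actions:
  fixes rho0 :: "'a0::finite \<Rightarrow> 'y0::finite \<Rightarrow> real"
    and rho1 :: "'a1::finite \<Rightarrow> 'a2::finite \<Rightarrow> 'y1::finite \<Rightarrow> real"
  assumes BR: "(\<alpha>0, \<alpha>2) \<in> BR rho0 u0 u2 s" and s: "is_strat s"
    and rho0: "\<And>a0. is_dist (rho0 a0)"
    and t: "is_strat t" "phi rho0 \<alpha>0 t = phi rho0 \<alpha>0 s" "gam rho0 \<alpha>0 t \<noteq> gam rho0 \<alpha>0 s"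
    and better: "ui_ext rho0 u1 \<alpha>0 s \<alpha>2 \<le> ui_ext rho0 u1 \<alpha>0 t \<alpha>2"
  shows "\<not> CD2 rho0 rho1 u0 u1 u2 s"
proof
  assume "CD2 rho0 rho1 u0 u1 u2 s"
  moreover have B: "(\<alpha>0, \<alpha>2) \<in> B_eta rho0 rho1 u0 u2 0 s"
    by (rule BR_imp_B_eta[OF BR s]) simp
  moreover have "gam rho0 \<alpha>0 t \<in> couplings (rho_marg rho0 \<alpha>0) (phi rho0 \<alpha>0 s)"
    using gam_in_couplings[of \<alpha>0 rho0 t, OF B_eta_is_dist(1)[OF B] rho0 t(1)] t(2) by simp
  ultimately have "ui_ext rho0 u1 \<alpha>0 t \<alpha>2 < ui_ext rho0 u1 \<alpha>0 s \<alpha>2"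
    using B t(3) unfolding CD2_def Let_def by (auto simp: ui_ext_eq_total_value total_value_def)
  with better show False
    by simp
qed

theorem not_monotone_strat_imp_not_confound_defeating:
  fixes rho0 :: "'a0::finite \<Rightarrow> 'y0::finite \<Rightarrow> real"
    and rho1 :: "'a1::finite \<Rightarrow> 'a2::finite \<Rightarrow> 'y1::finite \<Rightarrow> real"
  assumes rA: "linear_order rA" and sm: "strictly_supermodular rY rA u1"
    and rho0: "\<And>a0. is_dist (rho0 a0)" and full_support: "\<And>a0 y0. 0 < rho0 a0 y0"
    and s: "is_strat s" and not_mono: "\<not> monotone_strat rY rA s"
  shows "\<not> confound_defeating rho0 rho1 u0 u1 u2 s"
proof -
  obtain y0 y0' a1 a1' where y: "strict rY y0 y0'" and pos: "0 < s y0 a1" "0 < s y0' a1'"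
    and "(a1, a1') \<notin> rA"
    using not_mono unfolding monotone_strat_def by blast
  then have a: "strict rA a1' a1"
    by (simp add: linear_order_strict_if_not[OF rA])
  have ne: "y0 \<noteq> y0'" "a1 \<noteq> a1'"
    using y a by (auto simp: strict_def)
  obtain \<alpha>0 \<alpha>2 where BR: "(\<alpha>0, \<alpha>2) \<in> BR rho0 u0 u2 s"
    by (rule best_responses_exist)
  then have \<alpha>0: "is_dist \<alpha>0" and \<alpha>2: "is_dist \<alpha>2"
    by (simp_all add: BR_def)
  have m_pos: "0 < rho_marg rho0 \<alpha>0 y" for y
    using \<alpha>0 full_support rho0 by (rule rho_marg_pos)
  obtain e st where e: "0 < e" and st: "is_strat st"
    and gam_st: "gam rho0 \<alpha>0 st = (\<lambda>y a. gam rho0 \<alpha>0 s y a + e * swap_matrix y0 y0' a1 a1' y a)"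
    using swap_perturbation[OF s m_pos ne pos] by blast
  have value_st: "total_value U (gam rho0 \<alpha>0 st)
      = total_value U (gam rho0 \<alpha>0 s) + e * (U y0 a1' + U y0' a1 - U y0 a1 - U y0' a1')" for U
    by (simp add: gam_st total_value_add_scaled total_value_swap_matrix)
  let ?U = "u_avg u1 \<alpha>2"
  have "?U y0' a1' + ?U y0 a1 < ?U y0 a1' + ?U y0' a1"
    using strictly_supermodular2D[OF strictly_supermodular2_u_avg[OF sm \<alpha>2] y a] .
  with e have better: "ui_ext rho0 u1 \<alpha>0 s \<alpha>2 < ui_ext rho0 u1 \<alpha>0 st \<alpha>2"
    by (simp add: ui_ext_eq_total_value value_st)
  have "pdist rho0 rho1 \<alpha>0 st \<alpha>2 = pdist rho0 rho1 \<alpha>0 s \<alpha>2"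
    by (simp add: fun_eq_iff pdist_eq_ui_ext ui_ext_eq_total_value value_st u_avg_def)
  then have "\<not> CD1 rho0 rho1 u0 u1 u2 s"
    using better by (rule not_CD1_if_better_same_signals[OF s BR st])
  moreover have "\<not> CD2 rho0 rho1 u0 u1 u2 s"
  proof (rule not_CD2_if_better_same_actions[OF BR s rho0 st])
    show "phi rho0 \<alpha>0 st = phi rho0 \<alpha>0 s"
      by (simp add: fun_eq_iff phi_def gam_st sum.distrib sum_distrib_left[symmetric] swap_matrix_col)
    have "gam rho0 \<alpha>0 st y0 a1 \<noteq> gam rho0 \<alpha>0 s y0 a1"
      using e by (simp add: gam_st swap_matrix_source[OF ne])
    then show "gam rho0 \<alpha>0 st \<noteq> gam rho0 \<alpha>0 s"
      by auto
  qed (use better in simp)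
  ultimately show ?thesis
    by (simp add: confound_defeating_def)
qed

theorem proposition6:
  fixes rho0 :: "'a0::finite \<Rightarrow> 'y0::finite \<Rightarrow> real"
    and rho1 :: "'a1::finite \<Rightarrow> 'a2::finite \<Rightarrow> 'y1::finite \<Rightarrow> real"
    and u0 :: "'a0 \<Rightarrow> 'a1 \<Rightarrow> real"
    and u1 u2 :: "'y0 \<Rightarrow> 'a1 \<Rightarrow> 'a2 \<Rightarrow> real"
    and rY :: "'y0 rel" and rA :: "'a1 rel"
    and s1 :: "'y0 \<Rightarrow> 'a1 \<Rightarrow> real"
  assumes rho0_dist: "\<And>a0. is_dist (rho0 a0)"
    and rho1_dist: "\<And>a1 a2. is_dist (rho1 a1 a2)"
    and full_support: "\<And>a0 y0. rho0 a0 y0 > 0"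
    and supp_indep: "\<And>y1 a1 a2 a2'. rho1 a1 a2 y1 > 0 \<Longrightarrow> rho1 a1 a2' y1 > 0"
    and lin_indep: "\<And>a2 c. (\<forall>y1. (\<Sum>a1\<in>UNIV. c a1 * rho1 a1 a2 y1) = 0) \<Longrightarrow> (\<forall>a1. c a1 = 0)"
    and rY_total: "linear_order rY"
    and rA_total: "linear_order rA"
    and supermod: "strictly_supermodular rY rA u1"
    and s1_strat: "is_strat s1"
  shows "(confound_defeating rho0 rho1 u0 u1 u2 s1 \<longleftrightarrow> monotone_strat rY rA s1)
       \<and> (monotone_strat rY rA s1 \<longleftrightarrow> u_cyc_monotone_strat u1 s1)"
proof -
  have "confound_defeating rho0 rho1 u0 u1 u2 s1 \<longleftrightarrow> monotone_strat rY rA s1"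
    using monotone_strat_imp_CD2[where ?rho0.0 = rho0 and ?rho1.0 = rho1 and ?u0.0 = u0 and ?u2.0 = u2,
        OF rY_total rA_total supermod rho0_dist s1_strat]
      not_monotone_strat_imp_not_confound_defeating[where ?rho0.0 = rho0 and ?rho1.0 = rho1 and ?u0.0 = u0
        and ?u2.0 = u2, OF rA_total supermod rho0_dist full_support s1_strat]
    unfolding confound_defeating_def by blast
  moreover have "monotone_strat rY rA s1 \<longleftrightarrow> u_cyc_monotone_strat u1 s1"
    using monotone_strat_imp_u_cyc_monotone_strat[OF rY_total rA_total supermod]
      u_cyc_monotone_strat_imp_monotone_strat[OF rA_total supermod] by blast
  ultimately show ?thesis ..
qed

end
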